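(* Let $d>0$, let $\mathcal{S}$ be the 4-PAM constellation labeled by any Gray labeling, and let $\mathcal{B}\subset\{0,1\}^{2N}$ be a binary linear code with at least two codewords that contains codewords $\boldsymbol{b}'',\boldsymbol{b}'''$ such that $b''_1[k]=1$ for all $k$ and $b'''_2[k]=1$ for all $k$. Then $\mathsf{L}(\mathcal{B})=0$.
   Context: $\mathcal{S}=\{s_1,s_2,s_3,s_4\}$ with $s_1=-3d$, $s_2=-d$, $s_3=d$, $s_4=3d$. A labeling is a bijection $\Phi_{\mathcal{S}}:\{0,1\}^2\to\mathcal{S}$, described by $\boldsymbol{q}=[q_1,\dots,q_4]$ where $q_i$ is the integer whose two-bit representation $[b_1,b_2]$ (most significant bit first) is $\Phi_{\mathcal{S}}^{-1}(s_i)$; the Gray labelings are $[0,1,3,2]$, $[0,2,3,1]$, $[1,0,2,3]$, $[2,0,1,3]$. A codeword of $\mathcal{B}$ is written $\boldsymbol{b}=[\boldsymbol{b}[1],\dots,\boldsymbol{b}[N]]$ with $\boldsymbol{b}[k]=[b_1[k],b_2[k]]$, and the CM code is $\mathcal{X}=\{[\Phi_{\mathcal{S}}(\boldsymbol{b}[1]),\dots,\Phi_{\mathcal{S}}(\boldsymbol{b}[N])]:\boldsymbol{b}\in\mathcal{B}\}$. For $\boldsymbol{x},\hat{\boldsymbol{x}}\in\mathcal{S}^N$ and each $k$ with $x[k]\neq\hat{x}[k]$: $\mu^{\mathcal{X}}_k=\sigma^{2,\mathcal{X}}_k=(x[k]-\hat{x}[k])^2/(4d^2)$; $\mu^{\mathcal{B}}_k=\sigma^{2,\mathcal{B}}_k=(x[k]-\hat{x}[k])^2/(4d^2)$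 except that if $\{x[k],\hat{x}[k]\}=\{s_1,s_4\}$ then $\mu^{\mathcal{B}}_k=3$, $\sigma^{2,\mathcal{B}}_k=1$. Summing over $k$ with $x[k]\neq\hat{x}[k]$, $a^{\mathcal{X}}(\boldsymbol{x},\hat{\boldsymbol{x}})=\sum_k\mu^{\mathcal{X}}_k/\sqrt{\sum_k\sigma^{2,\mathcal{X}}_k}$ and $a^{\mathcal{B}}(\boldsymbol{x},\hat{\boldsymbol{x}})=\sum_k\mu^{\mathcal{B}}_k/\sqrt{\sum_k\sigma^{2,\mathcal{B}}_k}$ (normalized distances of the symbol-wise ML decoder and of the bit-wise max-log decoder under the zero-crossing approximation). The asymptotic loss of the code is $\mathsf{L}(\mathcal{B})=20\log_{10}\Big(\min_{\boldsymbol{x}\neq\hat{\boldsymbol{x}}\in\mathcal{X}}a^{\mathcal{X}}(\boldsymbol{x},\hat{\boldsymbol{x}})\big/\min_{\boldsymbol{x}\neq\hat{\boldsymbol{x}}\in\mathcal{X}}a^{\mathcal{B}}(\boldsymbol{x},\hat{\boldsymbol{x}})\Big)$ dB. *)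

theory Defs
  imports Complex_Main
begin

text \<open>Binary words of length N: a word is a map k \<mapsto> [b_1[k], b_2[k]] for k < N
  (indices 0..N-1 instead of 1..N), fixed to (False,False) for k \<ge> N.\<close>
definition words :: "nat \<Rightarrow> (nat \<Rightarrow> bool \<times> bool) set" where
  "words N = {b. \<forall>k\<ge>N. b k = (False, False)}"

definition bxor :: "(nat \<Rightarrow> bool \<times> bool) \<Rightarrow> (nat \<Rightarrow> bool \<times> bool) \<Rightarrow> nat \<Rightarrow> bool \<times> bool" where
  "bxor b c = (\<lambda>k. (fst (b k) \<noteq> fst (c k), snd (b k) \<noteq> snd (c k)))"

definition binary_linear_code :: "nat \<Rightarrow> (nat \<Rightarrow> bool \<times> bool) set \<Rightarrow> bool" where
  "binary_linear_code N B \<longleftrightarrow> B \<subseteq> words N \<and> (\<lambda>k. (False, False)) \<in> B \<and>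
     (\<forall>b\<in>B. \<forall>c\<in>B. bxor b c \<in> B)"

text \<open>4-PAM points s_1..s_4 (here indexed j = 0..3): s_{j+1} = (2j-3) d.\<close>
definition pam :: "real \<Rightarrow> nat \<Rightarrow> real" where
  "pam d j = (2 * real j - 3) * d"

definition gray_labelings :: "nat list set" where
  "gray_labelings = {[0,1,3,2], [0,2,3,1], [1,0,2,3], [2,0,1,3]}"

definition bitval :: "bool \<times> bool \<Rightarrow> nat" where
  "bitval b = 2 * of_bool (fst b) + of_bool (snd b)"

text \<open>Labeling \<Phi>_S determined by q: \<Phi>(b) = s_i where q_i = bitval b.\<close>
definition Phi :: "nat list \<Rightarrow> real \<Rightarrow> bool \<times> bool \<Rightarrow> real" where
  "Phi q d b = pam d (THE j. j < 4 \<and> q ! j = bitval b)"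

definition cm_code :: "nat list \<Rightarrow> real \<Rightarrow> nat \<Rightarrow> (nat \<Rightarrow> bool \<times> bool) set \<Rightarrow> (nat \<Rightarrow> real) set" where
  "cm_code q d N B = (\<lambda>b. (\<lambda>k. if k < N then Phi q d (b k) else 0)) ` B"

definition diffpos :: "nat \<Rightarrow> (nat \<Rightarrow> real) \<Rightarrow> (nat \<Rightarrow> real) \<Rightarrow> nat set" where
  "diffpos N x xh = {k. k < N \<and> x k \<noteq> xh k}"

definition muX :: "real \<Rightarrow> real \<Rightarrow> real \<Rightarrow> real" where
  "muX d a b = (a - b)^2 / (4 * d^2)"

definition sigX :: "real \<Rightarrow> real \<Rightarrow> real \<Rightarrow> real" where
  "sigX d a b = (a - b)^2 / (4 * d^2)"

definition muB :: "real \<Rightarrow> real \<Rightarrow> real \<Rightarrow> real" where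
  "muB d a b = (if {a, b} = {pam d 0, pam d 3} then 3 else (a - b)^2 / (4 * d^2))"

definition sigB :: "real \<Rightarrow> real \<Rightarrow> real \<Rightarrow> real" where
  "sigB d a b = (if {a, b} = {pam d 0, pam d 3} then 1 else (a - b)^2 / (4 * d^2))"

definition aX :: "real \<Rightarrow> nat \<Rightarrow> (nat \<Rightarrow> real) \<Rightarrow> (nat \<Rightarrow> real) \<Rightarrow> real" where
  "aX d N x xh = (\<Sum>k\<in>diffpos N x xh. muX d (x k) (xh k)) /
                 sqrt (\<Sum>k\<in>diffpos N x xh. sigX d (x k) (xh k))"

definition aB :: "real \<Rightarrow> nat \<Rightarrow> (nat \<Rightarrow> real) \<Rightarrow> (nat \<Rightarrow> real) \<Rightarrow> real" where
  "aB d N x xh = (\<Sum>k\<in>diffpos N x xh. muB d (x k) (xh k)) /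
                 sqrt (\<Sum>k\<in>diffpos N x xh. sigB d (x k) (xh k))"

definition asym_loss :: "nat list \<Rightarrow> real \<Rightarrow> nat \<Rightarrow> (nat \<Rightarrow> bool \<times> bool) set \<Rightarrow> real" where
  "asym_loss q d N B =
     (let X = cm_code q d N B in
      20 * log 10 (Min {aX d N x xh | x xh. x \<in> X \<and> xh \<in> X \<and> x \<noteq> xh} /
                   Min {aB d N x xh | x xh. x \<in> X \<and> xh \<in> X \<and> x \<noteq> xh}))"

end

theory Submission imports Defs begin

text \<open>Per coordinate the bit-wise metric satisfies \<open>\<mu>\<^sup>B = (\<mu>\<^sup>X + 3 \<sigma>\<^sup>B) / 4\<close> with
  \<open>\<sigma>\<^sup>B \<le> \<mu>\<^sup>X \<le> 9 \<sigma>\<^sup>B\<close>, which by AM-GM gives \<open>a\<^sup>B \<le> a\<^sup>X\<close> for every pair of codewords.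
  Conversely, for a Gray labeling \<open>\<sigma>\<^sup>B\<close> only depends on the error pattern \<open>b \<oplus> c\<close>: it is
  the squared distance from an inner point of the constellation to its translate by that
  pattern. The hypotheses provide a codeword \<open>c\<^sub>0\<close> labeling inner points only, and the
  codeword pair \<open>(c\<^sub>0, c\<^sub>0 \<oplus> b \<oplus> c)\<close> has \<open>a\<^sup>X = \<surd>(\<Sigma> \<sigma>\<^sup>B) \<le> a\<^sup>B(b, c)\<close>. So both minima agree.\<close>

lemma gray_labeling_cases:
  assumes "q \<in> gray_labelings"
  obtains "q = [0,1,3,2]" | "q = [0,2,3,1]" | "q = [1,0,2,3]" | "q = [2,0,1,3]"
  using assms by (auto simp: gray_labelings_def)

lemma bool_pair_cases:
  obtains "u = (False,False)" | "u = (False,True)" | "u = (True,False)" | "u = (True,True)"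
  by (cases u) auto

text \<open>Indices 1 and 2 are the inner points \<open>-d\<close> and \<open>d\<close> of the constellation.\<close>

definition gray_index :: "nat list \<Rightarrow> bool \<times> bool \<Rightarrow> nat" where
  "gray_index q u = (if q!0 = bitval u then 0 else if q!1 = bitval u then 1
     else if q!2 = bitval u then 2 else 3)"

lemma Phi_gray:
  assumes "q \<in> gray_labelings"
  shows "Phi q d u = pam d (gray_index q u)"
proof -
  have less_4: "(j::nat) < 4 \<longleftrightarrow> j = 0 \<or> j = 1 \<or> j = 2 \<or> j = 3" for j by auto
  have "(THE j. j < 4 \<and> q ! j = bitval u) = gray_index q u"
    by (rule the_equality; cases u rule: bool_pair_cases; cases rule: gray_labeling_cases[OF assms])
       (auto simp: gray_index_def bitval_def less_4)
  then show ?thesis by (simp add: Phi_def)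
qed

lemma pam_eq_iff: "d \<noteq> 0 \<Longrightarrow> pam d i = pam d j \<longleftrightarrow> i = j"
  by (auto simp: pam_def)

lemma muX_pam: "d \<noteq> 0 \<Longrightarrow> muX d (pam d i) (pam d j) = (real i - real j)^2"
  by (simp add: muX_def pam_def power2_eq_square field_simps)

lemma pam_outer_pair_iff:
  assumes "d \<noteq> 0"
  shows "{pam d i, pam d j} = {pam d 0, pam d 3} \<longleftrightarrow> {i, j} = {0, 3::nat}"
proof -
  have "inj (pam d)" using pam_eq_iff[OF assms] by (auto intro: injI)
  then show ?thesis using inj_image_eq_iff[of "pam d" "{i, j}" "{0, 3}"] by simp
qed

lemma muB_pam:
  "d \<noteq> 0 \<Longrightarrow> muB d (pam d i) (pam d j) = (if {i,j} = {0,3::nat} then 3 else (real i - real j)^2)"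
  using pam_outer_pair_iff[of d i j] muX_pam[of d i j] by (simp add: muB_def muX_def)

lemma sigB_pam:
  "d \<noteq> 0 \<Longrightarrow> sigB d (pam d i) (pam d j) = (if {i,j} = {0,3::nat} then 1 else (real i - real j)^2)"
  using pam_outer_pair_iff[of d i j] muX_pam[of d i j] by (simp add: sigB_def muX_def)

lemmas gray_symbol_simps =
  muX_pam muB_pam sigB_pam pam_eq_iff gray_index_def bitval_def doubleton_eq_iff

definition pair_xor :: "bool \<times> bool \<Rightarrow> bool \<times> bool \<Rightarrow> bool \<times> bool" where
  "pair_xor u v = (fst u \<noteq> fst v, snd u \<noteq> snd v)"

lemma bxor_apply: "bxor b c k = pair_xor (b k) (c k)"
  by (simp add: bxor_def pair_xor_def)

definition modulate :: "nat list \<Rightarrow> real \<Rightarrow> nat \<Rightarrow> (nat \<Rightarrow> bool \<times> bool) \<Rightarrow> nat \<Rightarrow> real" where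
  "modulate q d N b = (\<lambda>k. if k < N then Phi q d (b k) else 0)"

lemma cm_code_eq_image_modulate: "cm_code q d N B = modulate q d N ` B"
  by (simp add: cm_code_def modulate_def)

definition muX_total :: "nat list \<Rightarrow> real \<Rightarrow> nat \<Rightarrow> (nat \<Rightarrow> bool \<times> bool) \<Rightarrow> (nat \<Rightarrow> bool \<times> bool) \<Rightarrow> real" where
  "muX_total q d N b c = (\<Sum>k | k < N \<and> b k \<noteq> c k. muX d (Phi q d (b k)) (Phi q d (c k)))"

definition sigB_total :: "nat list \<Rightarrow> real \<Rightarrow> nat \<Rightarrow> (nat \<Rightarrow> bool \<times> bool) \<Rightarrow> (nat \<Rightarrow> bool \<times> bool) \<Rightarrow> real" where
  "sigB_total q d N b c = (\<Sum>k | k < N \<and> b k \<noteq> c k. sigB d (Phi q d (b k)) (Phi q d (c k)))"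

lemma aX_eq_sqrt: "aX d N x xh = sqrt (\<Sum>k\<in>diffpos N x xh. muX d (x k) (xh k))"
proof -
  have "(\<Sum>k\<in>diffpos N x xh. muX d (x k) (xh k)) \<ge> 0"
    by (rule sum_nonneg) (simp add: muX_def)
  then show ?thesis by (simp add: aX_def sigX_def muX_def[symmetric] real_div_sqrt)
qed

lemma mean_div_sqrt_le_sqrt:
  fixes M S :: real
  assumes "0 < S" "S \<le> M" "M \<le> 9 * S"
  shows "(M + 3 * S) / 4 / sqrt S \<le> sqrt M"
proof -
  have "((M + 3 * S) / 4)^2 = M * S - (M - S) * (9 * S - M) / 16"
    by (simp add: power2_eq_square field_simps)
  also have "\<dots> \<le> M * S" using assms by simp
  finally have "(M + 3 * S) / 4 \<le> sqrt (M * S)" by (rule real_le_rsqrt)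
  then show ?thesis using assms(1) by (simp add: pos_divide_le_eq real_sqrt_mult)
qed

lemma words_differ_below:
  assumes "b \<in> words N" "c \<in> words N" "b \<noteq> c"
  shows "\<exists>k<N. b k \<noteq> c k"
proof -
  obtain k where "b k \<noteq> c k" using assms(3) by auto
  moreover have "k < N"
  proof (rule ccontr)
    assume "\<not> k < N"
    then have "b k = c k" using assms(1,2) by (simp add: words_def)
    with \<open>b k \<noteq> c k\<close> show False by simp
  qed
  ultimately show ?thesis by blast
qed

lemma Min_eq_if_mutually_bounded:
  fixes A C :: "'a::linorder set"
  assumes "finite A" "finite C" "A \<noteq> {}" "C \<noteq> {}"
    and "\<forall>a\<in>A. \<exists>c\<in>C. c \<le> a" and "\<forall>c\<in>C. \<exists>a\<in>A. a \<le> c"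
  shows "Min A = Min C"
proof -
  have Min_le_Min: "Min Y \<le> Min X"
    if "finite X" "finite Y" "X \<noteq> {}" "\<forall>x\<in>X. \<exists>y\<in>Y. y \<le> x" for X Y :: "'a set"
    using that by (meson Min_in Min_le order_trans)
  show ?thesis using assms by (intro antisym Min_le_Min)
qed

lemma inner_codeword_exists:
  assumes "q \<in> gray_labelings" and "(\<lambda>k. (False, False)) \<in> B"
    and "\<exists>b\<in>B. \<forall>k<N. fst (b k)" and "\<exists>b\<in>B. \<forall>k<N. snd (b k)"
  obtains c\<^sub>0 where "c\<^sub>0 \<in> B" "\<forall>k<N. gray_index q (c\<^sub>0 k) \<in> {1, 2}"
  \<comment> \<open>The inner points carry the labels with \<open>b\<^sub>2 = 1\<close>, \<open>b\<^sub>1 = 1\<close>, \<open>b\<^sub>2 = 0\<close>, \<open>b\<^sub>1 = 0\<close>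
      for the four labelings, so \<open>b'''\<close>, \<open>b''\<close> or the zero codeword is a witness.\<close>
proof (cases rule: gray_labeling_cases[OF assms(1)])
  case 1
  then show ?thesis using assms(4) that by (fastforce simp: gray_index_def bitval_def)
next
  case 2
  then show ?thesis using assms(3) that by (fastforce simp: gray_index_def bitval_def)
next
  case 3
  then show ?thesis using assms(2) that by (fastforce simp: gray_index_def bitval_def)
next
  case 4
  then show ?thesis using assms(2) that by (fastforce simp: gray_index_def bitval_def)
qed

context
  fixes q :: "nat list" and d :: real
  assumes gray: "q \<in> gray_labelings" and d_nonzero: "d \<noteq> 0"
begin

lemma Phi_eq_iff: "Phi q d u = Phi q d v \<longleftrightarrow> u = v"
  unfolding Phi_gray[OF gray]
  by (cases rule: gray_labeling_cases[OF gray]; cases u rule: bool_pair_cases;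
      cases v rule: bool_pair_cases) (simp_all add: gray_symbol_simps d_nonzero)

lemma muB_Phi_eq_mean:
  "muB d (Phi q d u) (Phi q d v) = (muX d (Phi q d u) (Phi q d v) + 3 * sigB d (Phi q d u) (Phi q d v)) / 4"
  unfolding Phi_gray[OF gray]
  by (cases rule: gray_labeling_cases[OF gray]; cases u rule: bool_pair_cases;
      cases v rule: bool_pair_cases) (simp_all add: gray_symbol_simps d_nonzero)

lemma sigB_Phi_le_muX: "sigB d (Phi q d u) (Phi q d v) \<le> muX d (Phi q d u) (Phi q d v)"
  unfolding Phi_gray[OF gray]
  by (cases rule: gray_labeling_cases[OF gray]; cases u rule: bool_pair_cases;
      cases v rule: bool_pair_cases) (simp_all add: gray_symbol_simps d_nonzero)

lemma muX_Phi_le_9_sigB: "muX d (Phi q d u) (Phi q d v) \<le> 9 * sigB d (Phi q d u) (Phi q d v)"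
  unfolding Phi_gray[OF gray]
  by (cases rule: gray_labeling_cases[OF gray]; cases u rule: bool_pair_cases;
      cases v rule: bool_pair_cases) (simp_all add: gray_symbol_simps d_nonzero)

lemma sigB_Phi_pos: "u \<noteq> v \<Longrightarrow> sigB d (Phi q d u) (Phi q d v) > 0"
  unfolding Phi_gray[OF gray]
  by (cases rule: gray_labeling_cases[OF gray]; cases u rule: bool_pair_cases;
      cases v rule: bool_pair_cases) (simp_all add: gray_symbol_simps d_nonzero)

lemma sigB_Phi_eq_muX_from_inner:
  assumes "gray_index q c \<in> {1, 2}"
  shows "sigB d (Phi q d u) (Phi q d v) = muX d (Phi q d c) (Phi q d (pair_xor c (pair_xor u v)))"
  using assms unfolding Phi_gray[OF gray]
  by (cases rule: gray_labeling_cases[OF gray]; cases u rule: bool_pair_cases;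
      cases v rule: bool_pair_cases; cases c rule: bool_pair_cases)
     (simp_all add: gray_symbol_simps pair_xor_def d_nonzero)

lemma modulate_eq_iff: "modulate q d N b = modulate q d N c \<longleftrightarrow> (\<forall>k<N. b k = c k)"
proof
  assume "modulate q d N b = modulate q d N c"
  then have "Phi q d (b k) = Phi q d (c k)" if "k < N" for k
    using fun_cong[of _ _ k] that by (fastforce simp: modulate_def)
  then show "\<forall>k<N. b k = c k" by (simp add: Phi_eq_iff)
qed (simp add: modulate_def fun_eq_iff)

lemma diffpos_modulate:
  "diffpos N (modulate q d N b) (modulate q d N c) = {k. k < N \<and> b k \<noteq> c k}"
  by (auto simp: diffpos_def modulate_def Phi_eq_iff)

lemma aX_modulate: "aX d N (modulate q d N b) (modulate q d N c) = sqrt (muX_total q d N b c)"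
  unfolding aX_eq_sqrt diffpos_modulate muX_total_def
  by (rule arg_cong[where f = sqrt], rule sum.cong) (simp_all add: modulate_def)

lemma aB_modulate:
  "aB d N (modulate q d N b) (modulate q d N c) =
     (muX_total q d N b c + 3 * sigB_total q d N b c) / 4 / sqrt (sigB_total q d N b c)"
proof -
  have "(\<Sum>k | k < N \<and> b k \<noteq> c k. muB d (modulate q d N b k) (modulate q d N c k)) =
        (\<Sum>k | k < N \<and> b k \<noteq> c k.
          (muX d (Phi q d (b k)) (Phi q d (c k)) + 3 * sigB d (Phi q d (b k)) (Phi q d (c k))) / 4)"
    by (rule sum.cong) (simp_all add: modulate_def muB_Phi_eq_mean)
  also have "\<dots> = (muX_total q d N b c + 3 * sigB_total q d N b c) / 4"
    unfolding muX_total_def sigB_total_def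
    by (simp add: sum_divide_distrib[symmetric] sum.distrib sum_distrib_left)
  finally have muB_sum: "(\<Sum>k | k < N \<and> b k \<noteq> c k. muB d (modulate q d N b k) (modulate q d N c k)) =
      (muX_total q d N b c + 3 * sigB_total q d N b c) / 4" .
  have sigB_sum: "(\<Sum>k | k < N \<and> b k \<noteq> c k. sigB d (modulate q d N b k) (modulate q d N c k)) =
        sigB_total q d N b c"
    unfolding sigB_total_def by (rule sum.cong) (simp_all add: modulate_def)
  show ?thesis by (simp only: aB_def diffpos_modulate muB_sum sigB_sum)
qed

lemma sigB_total_pos: "\<exists>k<N. b k \<noteq> c k \<Longrightarrow> sigB_total q d N b c > 0"
  unfolding sigB_total_def by (rule sum_pos) (auto intro: sigB_Phi_pos)

lemma sigB_total_le_muX_total: "sigB_total q d N b c \<le> muX_total q d N b c"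
  unfolding sigB_total_def muX_total_def by (rule sum_mono) (rule sigB_Phi_le_muX)

lemma muX_total_le_9_sigB_total: "muX_total q d N b c \<le> 9 * sigB_total q d N b c"
  unfolding sigB_total_def muX_total_def sum_distrib_left by (rule sum_mono) (rule muX_Phi_le_9_sigB)

lemma muX_total_from_inner:
  assumes inner: "\<forall>k<N. gray_index q (c\<^sub>0 k) \<in> {1, 2}"
  shows "muX_total q d N c\<^sub>0 (bxor c\<^sub>0 (bxor b c)) = sigB_total q d N b c"
proof -
  have "{k. k < N \<and> c\<^sub>0 k \<noteq> bxor c\<^sub>0 (bxor b c) k} = {k. k < N \<and> b k \<noteq> c k}"
    by (auto simp: bxor_apply pair_xor_def prod_eq_iff)
  then have "muX_total q d N c\<^sub>0 (bxor c\<^sub>0 (bxor b c)) =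
      (\<Sum>k | k < N \<and> b k \<noteq> c k. muX d (Phi q d (c\<^sub>0 k)) (Phi q d (bxor c\<^sub>0 (bxor b c) k)))"
    by (simp only: muX_total_def)
  also have "\<dots> = sigB_total q d N b c"
    unfolding sigB_total_def
  proof (rule sum.cong)
    fix k assume "k \<in> {k. k < N \<and> b k \<noteq> c k}"
    then have "gray_index q (c\<^sub>0 k) \<in> {1, 2}" using inner by simp
    from sigB_Phi_eq_muX_from_inner[OF this, of "b k" "c k"]
    show "muX d (Phi q d (c\<^sub>0 k)) (Phi q d (bxor c\<^sub>0 (bxor b c) k)) = sigB d (Phi q d (b k)) (Phi q d (c k))"
      by (simp add: bxor_apply)
  qed simp
  finally show ?thesis .
qed

lemma aB_le_aX_modulate:
  assumes "\<exists>k<N. b k \<noteq> c k"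
  shows "aB d N (modulate q d N b) (modulate q d N c) \<le> aX d N (modulate q d N b) (modulate q d N c)"
  unfolding aB_modulate aX_modulate
  by (rule mean_div_sqrt_le_sqrt[OF sigB_total_pos[OF assms] sigB_total_le_muX_total
        muX_total_le_9_sigB_total])

lemma aX_from_inner_le_aB_modulate:
  assumes "\<forall>k<N. gray_index q (c\<^sub>0 k) \<in> {1, 2}" and "\<exists>k<N. b k \<noteq> c k"
  shows "aX d N (modulate q d N c\<^sub>0) (modulate q d N (bxor c\<^sub>0 (bxor b c)))
           \<le> aB d N (modulate q d N b) (modulate q d N c)"
proof -
  define S where "S = sigB_total q d N b c"
  have "S > 0" using sigB_total_pos[OF assms(2)] by (simp add: S_def)
  have "S \<le> (muX_total q d N b c + 3 * S) / 4"
    using sigB_total_le_muX_total[of N b c] by (simp add: S_def)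
  then have "S / sqrt S \<le> (muX_total q d N b c + 3 * S) / 4 / sqrt S"
    by (rule divide_right_mono) (use \<open>S > 0\<close> in simp)
  then show ?thesis
    using \<open>S > 0\<close> by (simp add: aX_modulate aB_modulate muX_total_from_inner[OF assms(1)]
        S_def[symmetric] real_div_sqrt)
qed

lemma distinct_pairs_cm_code:
  "{f x xh | x xh. x \<in> cm_code q d N B \<and> xh \<in> cm_code q d N B \<and> x \<noteq> xh} =
   (\<lambda>(b, c). f (modulate q d N b) (modulate q d N c)) ` {(b, c). b \<in> B \<and> c \<in> B \<and> (\<exists>k<N. b k \<noteq> c k)}"
  (is "?pairs = ?image")
proof (intro equalityI subsetI)
  fix a assume "a \<in> ?pairs"
  then obtain b c where "b \<in> B" "c \<in> B" "modulate q d N b \<noteq> modulate q d N c"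
    and a: "a = f (modulate q d N b) (modulate q d N c)"
    by (auto simp: cm_code_eq_image_modulate)
  then have "(b, c) \<in> {(b, c). b \<in> B \<and> c \<in> B \<and> (\<exists>k<N. b k \<noteq> c k)}"
    by (simp add: modulate_eq_iff)
  then show "a \<in> ?image" unfolding a by (rule rev_image_eqI) simp
next
  fix a assume "a \<in> ?image"
  then obtain b c where "b \<in> B" "c \<in> B" "\<exists>k<N. b k \<noteq> c k"
    and a: "a = f (modulate q d N b) (modulate q d N c)"
    by auto
  then have "modulate q d N b \<in> cm_code q d N B" "modulate q d N c \<in> cm_code q d N B"
    "modulate q d N b \<noteq> modulate q d N c"
    by (auto simp: cm_code_eq_image_modulate modulate_eq_iff)
  then show "a \<in> ?pairs" unfolding a by blast
qed

lemma Min_aX_eq_Min_aB: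
  assumes code: "binary_linear_code N B" and "finite B" and "\<exists>b\<in>B. \<exists>c\<in>B. b \<noteq> c"
    and c\<^sub>0: "c\<^sub>0 \<in> B" "\<forall>k<N. gray_index q (c\<^sub>0 k) \<in> {1, 2}"
  shows "Min {aX d N x xh | x xh. x \<in> cm_code q d N B \<and> xh \<in> cm_code q d N B \<and> x \<noteq> xh} =
         Min {aB d N x xh | x xh. x \<in> cm_code q d N B \<and> xh \<in> cm_code q d N B \<and> x \<noteq> xh}"
proof -
  define P where "P = {(b, c). b \<in> B \<and> c \<in> B \<and> (\<exists>k<N. b k \<noteq> c k)}"
  define aX' where "aX' = (\<lambda>(b, c). aX d N (modulate q d N b) (modulate q d N c))"
  define aB' where "aB' = (\<lambda>(b, c). aB d N (modulate q d N b) (modulate q d N c))"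
  have words: "B \<subseteq> words N" and closed: "\<And>b c. b \<in> B \<Longrightarrow> c \<in> B \<Longrightarrow> bxor b c \<in> B"
    using code by (auto simp: binary_linear_code_def)
  have "P \<subseteq> B \<times> B" by (auto simp: P_def)
  then have "finite P" using \<open>finite B\<close> by (simp add: finite_subset)
  obtain b c where "b \<in> B" "c \<in> B" "b \<noteq> c" using assms(3) by blast
  with words have "\<exists>k<N. b k \<noteq> c k" by (blast intro: words_differ_below)
  then have "P \<noteq> {}" using \<open>b \<in> B\<close> \<open>c \<in> B\<close> by (auto simp: P_def)
  have "Min (aX' ` P) = Min (aB' ` P)"
  proof (rule Min_eq_if_mutually_bounded)
    show "finite (aX' ` P)" "finite (aB' ` P)" "aX' ` P \<noteq> {}" "aB' ` P \<noteq> {}"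
      using \<open>finite P\<close> \<open>P \<noteq> {}\<close> by simp_all
    show "\<forall>a\<in>aX' ` P. \<exists>a'\<in>aB' ` P. a' \<le> a"
      by (auto simp: P_def aX'_def aB'_def intro!: bexI aB_le_aX_modulate)
    show "\<forall>a\<in>aB' ` P. \<exists>a'\<in>aX' ` P. a' \<le> a"
    proof (intro ballI, elim imageE)
      fix a p assume a: "a = aB' p" and "p \<in> P"
      then obtain b c where p: "p = (b, c)" "b \<in> B" "c \<in> B" and differ: "\<exists>k<N. b k \<noteq> c k"
        by (auto simp: P_def)
      have "(c\<^sub>0, bxor c\<^sub>0 (bxor b c)) \<in> P"
        using closed p c\<^sub>0(1) differ by (auto simp: P_def bxor_apply pair_xor_def prod_eq_iff)
      moreover have "aX' (c\<^sub>0, bxor c\<^sub>0 (bxor b c)) \<le> a"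
        unfolding a p aX'_def aB'_def by (simp add: aX_from_inner_le_aB_modulate[OF c\<^sub>0(2) differ])
      ultimately show "\<exists>a'\<in>aX' ` P. a' \<le> a" by blast
    qed
  qed
  then show ?thesis by (simp only: distinct_pairs_cm_code P_def aX'_def aB'_def)
qed

end

theorem corollary2:
  fixes d :: real and q :: "nat list" and N :: nat
    and B :: "(nat \<Rightarrow> bool \<times> bool) set"
  assumes "d > 0"
    and "q \<in> gray_labelings"
    and "binary_linear_code N B"
    and "card B \<ge> 2"
    and "\<exists>b''\<in>B. \<forall>k<N. fst (b'' k)"
    and "\<exists>b'''\<in>B. \<forall>k<N. snd (b''' k)"
  shows "asym_loss q d N B = 0"
proof -
  have "finite B" using assms(4) by (metis card.infinite not_numeral_le_zero)
  have two_codewords: "\<exists>b\<in>B. \<exists>c\<in>B. b \<noteq> c"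
    using assms(4) card_le_Suc0_iff_eq[OF \<open>finite B\<close>] by fastforce
  have "(\<lambda>k. (False, False)) \<in> B" using assms(3) by (simp add: binary_linear_code_def)
  then obtain c\<^sub>0 where "c\<^sub>0 \<in> B" "\<forall>k<N. gray_index q (c\<^sub>0 k) \<in> {1, 2}"
    using inner_codeword_exists[OF assms(2) _ assms(5,6)] by blast
  then have "Min {aX d N x xh | x xh. x \<in> cm_code q d N B \<and> xh \<in> cm_code q d N B \<and> x \<noteq> xh} =
        Min {aB d N x xh | x xh. x \<in> cm_code q d N B \<and> xh \<in> cm_code q d N B \<and> x \<noteq> xh}"
    using assms(1) by (intro Min_aX_eq_Min_aB[OF assms(2) _ assms(3) \<open>finite B\<close> two_codewords]) auto
  \<comment> \<open>\<open>log 10 (m / m) = 0\<close> holds even for \<open>m = 0\<close>, as \<open>0 / 0 = 0\<close> and \<open>ln 0 = 0\<close>.\<close>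
  then show ?thesis by (simp add: asym_loss_def Let_def log_def)
qed

end
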